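(* Let $\Gamma$ be a countably infinite group with a strictly decreasing sequence $\{\Gamma_n\}$ of finite-index normal subgroups with trivial intersection, $X=\varprojlim\Gamma/\Gamma_n$ with left translation action and quotient maps $\pi_n:X\to\Gamma/\Gamma_n$, and for $n\ge2$ let $\gamma_n\in\Gamma_{n-1}\setminus\Gamma_n$ and $C_n=\pi_n^{-1}(\gamma_n\Gamma_n)$. Let $s_1,s_2\in\Gamma$ and $x,y\in X$ with $s_1x\in C_{n_1}$, $s_2x\in C_{n_2}$ where $n_1<n_2$, and $s_1y\notin C_{n_1}$, $s_2y\in C_{m_2}$. Then $m_2\le n_1$.
   Context: $X=\varprojlim\Gamma/\Gamma_n$ is the compact group of compatible sequences in $\prod_n\Gamma/\Gamma_n$ containing $\Gamma$ as a subgroup; $\Gamma$ acts by left translation. All indices $n_1,n_2,m_2$ are $\ge2$. *)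

theory Defs
  imports "HOL-Algebra.Algebra"
begin

text \<open>The subgroups are indexed \<open>N 1, N 2, ...\<close>. An element of the inverse limit
  X = lim Gamma/Gamma_n is a compatible sequence of left cosets \<open>x n = a_n Gamma_n\<close>
  (n >= 1), compatibility meaning that the coset at level n+1 projects to the
  coset at level n, i.e. is contained in it. The unused index 0 is normalised
  to the whole group.\<close>

definition invlim :: "('a, 'b) monoid_scheme \<Rightarrow> (nat \<Rightarrow> 'a set) \<Rightarrow> (nat \<Rightarrow> 'a set) set" where
  "invlim G N = {x. x 0 = carrier G
      \<and> (\<forall>n\<ge>1. \<exists>a\<in>carrier G. x n = a <#\<^bsub>G\<^esub> N n)
      \<and> (\<forall>n\<ge>1. x (Suc n) \<subseteq> x n)}"

definition transl :: "('a, 'b) monoid_scheme \<Rightarrow> 'a \<Rightarrow> (nat \<Rightarrow> 'a set) \<Rightarrow> (nat \<Rightarrow> 'a set)" where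
  "transl G s x = (\<lambda>n. s <#\<^bsub>G\<^esub> x n)"

definition proj :: "(nat \<Rightarrow> 'a set) \<Rightarrow> nat \<Rightarrow> 'a set" where
  "proj x n = x n"

definition cyl :: "('a, 'b) monoid_scheme \<Rightarrow> (nat \<Rightarrow> 'a set) \<Rightarrow> (nat \<Rightarrow> 'a) \<Rightarrow> nat \<Rightarrow> (nat \<Rightarrow> 'a set) set" where
  "cyl G N g n = {x \<in> invlim G N. proj x n = g n <#\<^bsub>G\<^esub> N n}"

end

theory Submission
  imports Defs
begin

text \<open>If \<open>m\<^sub>2 > n\<^sub>1\<close>, then \<open>s\<^sub>2x\<close> and \<open>s\<^sub>2y\<close> lie in cylinders above level \<open>n\<^sub>1\<close>
  whose defining cosets \<open>\<gamma>\<^sub>k\<Gamma>\<^sub>k\<close> are contained in \<open>\<Gamma>\<^sub>n\<^sub>1\<close>; so both project to the trivial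
  coset at level \<open>n\<^sub>1\<close>, hence \<open>x\<close> and \<open>y\<close> agree at level \<open>n\<^sub>1\<close>, and \<open>s\<^sub>1y\<close> lies in
  \<open>C\<^sub>n\<^sub>1\<close> together with \<open>s\<^sub>1x\<close>.\<close>

no_notation (ASCII) subset_mset (infix \<open><#\<close> 50)

lemma (in group) lcos_cancel:
  assumes "s \<in> carrier G" "A \<subseteq> carrier G" "B \<subseteq> carrier G"
  shows "s <# A = s <# B \<longleftrightarrow> A = B"
proof
  assume "s <# A = s <# B"
  then have "inv s <# (s <# A) = inv s <# (s <# B)" by simp
  then show "A = B"
    using assms by (simp add: lcos_m_assoc lcos_mult_one)
qed simp

lemma (in group) lcos_carrier_eq:
  assumes "s \<in> carrier G"
  shows "s <# carrier G = carrier G"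
proof -
  have "s \<in> \<one> <# carrier G"
    using assms by (simp add: lcos_mult_one)
  then have "\<one> <# carrier G = s <# carrier G"
    by (rule l_repr_independence) (simp_all add: subgroup_self)
  then show ?thesis by (simp add: lcos_mult_one)
qed

lemma (in group) lcos_subgroup_eq:
  assumes "subgroup H G" "a \<in> carrier G" "c \<in> a <# H" "c \<in> H"
  shows "a <# H = H"
proof -
  have "a <# H = c <# H"
    using assms(3,2,1) by (rule l_repr_independence)
  also have "\<dots> = \<one> <# H"
    using assms by (metis l_repr_independence lcos_mult_one one_closed subgroup.subset)
  finally show ?thesis
    using assms by (simp add: lcos_mult_one subgroup.subset)
qed

locale subgroup_chain = group G for G :: "('a, 'b) monoid_scheme" (structure) +
  fixes N :: "nat \<Rightarrow> 'a set"
  assumes subgroup_N: "1 \<le> n \<Longrightarrow> subgroup (N n) G"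
    and N_Suc_subset: "1 \<le> n \<Longrightarrow> N (Suc n) \<subseteq> N n"
begin

lemma N_antimono:
  assumes "1 \<le> n" "n \<le> m"
  shows "N m \<subseteq> N n"
  using assms(2,1)
proof (induction m rule: dec_induct)
  case (step k)
  then show ?case using N_Suc_subset[of k] by simp
qed simp

lemma invlim_lcosetE:
  assumes "z \<in> invlim G N" "1 \<le> n"
  obtains a where "a \<in> carrier G" "z n = a <# N n"
  using assms unfolding invlim_def by blast

lemma invlim_Suc_subset:
  assumes "z \<in> invlim G N" "1 \<le> n"
  shows "z (Suc n) \<subseteq> z n"
  using assms unfolding invlim_def by blast

lemma invlim_antimono:
  assumes z: "z \<in> invlim G N" and "1 \<le> n" "n \<le> m"
  shows "z m \<subseteq> z n"
  using assms(3)
proof (induction m rule: dec_induct)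
  case (step k)
  have "z (Suc k) \<subseteq> z k"
    using invlim_Suc_subset[OF z] \<open>1 \<le> n\<close> \<open>n \<le> k\<close> by simp
  with step.IH show ?case by blast
qed simp

lemma invlim_subset_carrier:
  assumes "z \<in> invlim G N"
  shows "z n \<subseteq> carrier G"
proof (cases "n = 0")
  case True
  then show ?thesis using assms unfolding invlim_def by simp
next
  case False
  then have "1 \<le> n" by simp
  then obtain a where "a \<in> carrier G" "z n = a <# N n"
    using invlim_lcosetE[OF assms] by blast
  then show ?thesis
    using \<open>1 \<le> n\<close> by (simp add: l_coset_subset_G subgroup.subset subgroup_N)
qed

lemma invlim_eq_subgroup:
  assumes z: "z \<in> invlim G N" and "1 \<le> n" "n \<le> m" and sub: "z m \<subseteq> N n"
  shows "z n = N n"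
proof -
  have "1 \<le> m"
    using assms by simp
  then obtain b where "b \<in> carrier G" "z m = b <# N m"
    using invlim_lcosetE[OF z] by blast
  then have "b \<in> z m"
    using \<open>1 \<le> m\<close> by (simp add: lcos_self subgroup_N)
  moreover obtain a where "a \<in> carrier G" "z n = a <# N n"
    using invlim_lcosetE[OF z \<open>1 \<le> n\<close>] .
  ultimately show ?thesis
    using invlim_antimono[OF assms(1-3)] sub subgroup_N[OF \<open>1 \<le> n\<close>]
    by (metis lcos_subgroup_eq subsetD)
qed

lemma transl_invlim:
  assumes s: "s \<in> carrier G" and z: "z \<in> invlim G N"
  shows "transl G s z \<in> invlim G N"
  unfolding invlim_def mem_Collect_eq
proof (intro conjI allI impI)
  show "transl G s z 0 = carrier G"
    using z s unfolding invlim_def transl_def by (simp add: lcos_carrier_eq)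
next
  fix n :: nat
  assume "1 \<le> n"
  then obtain a where "a \<in> carrier G" "z n = a <# N n"
    using invlim_lcosetE[OF z] by blast
  then show "\<exists>a\<in>carrier G. transl G s z n = a <# N n"
    using s \<open>1 \<le> n\<close> unfolding transl_def
    by (intro bexI[of _ "s \<otimes> a"]) (simp_all add: lcos_m_assoc subgroup.subset subgroup_N)
next
  fix n :: nat
  assume "1 \<le> n"
  then show "transl G s z (Suc n) \<subseteq> transl G s z n"
    using invlim_antimono[OF z, of n "Suc n"] unfolding transl_def l_coset_def by auto
qed

lemma transl_level_eq_iff:
  assumes "s \<in> carrier G" "z \<in> invlim G N" "z' \<in> invlim G N"
  shows "transl G s z n = transl G s z' n \<longleftrightarrow> z n = z' n"
  using assms unfolding transl_def by (simp add: lcos_cancel invlim_subset_carrier)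

lemma cyl_lower_level:
  assumes g: "g m \<in> N (m - 1)" and z: "z \<in> cyl G N g m" and "1 \<le> n" "n < m"
  shows "z n = N n"
proof -
  have sg: "subgroup (N n) G"
    using subgroup_N \<open>1 \<le> n\<close> .
  have "n \<le> m - 1"
    using \<open>n < m\<close> by simp
  then have "g m \<in> N n" "N m \<subseteq> N n"
    using g N_antimono[of n "m - 1"] N_antimono[of n m] assms(3,4) by auto
  then have "g m <# N m \<subseteq> N n"
    unfolding l_coset_def using sg by (auto intro: subgroup.m_closed)
  moreover have "z \<in> invlim G N" "z m = g m <# N m"
    using z unfolding cyl_def proj_def by auto
  ultimately show ?thesis
    using invlim_eq_subgroup[of z n m] assms(3,4) by simp
qed

end

theorem lemma4p5:
  fixes G :: "('a, 'b) monoid_scheme"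
    and N :: "nat \<Rightarrow> 'a set"
    and g :: "nat \<Rightarrow> 'a"
    and s1 s2 :: 'a
    and x y :: "nat \<Rightarrow> 'a set"
    and n1 n2 m2 :: nat
  assumes grp: "group G"
    and cnt: "countable (carrier G)" and inf: "infinite (carrier G)"
    and nrm: "\<And>n. n \<ge> 1 \<Longrightarrow> N n \<lhd> G"
    and fin_idx: "\<And>n. n \<ge> 1 \<Longrightarrow> finite (rcosets\<^bsub>G\<^esub> (N n))"
    and decr: "\<And>n. n \<ge> 1 \<Longrightarrow> N (Suc n) \<subset> N n"
    and triv: "(\<Inter>n\<in>{1..}. N n) = {\<one>\<^bsub>G\<^esub>}"
    and gam: "\<And>n. n \<ge> 2 \<Longrightarrow> g n \<in> N (n - 1) - N n"
    and s: "s1 \<in> carrier G" "s2 \<in> carrier G"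
    and xy: "x \<in> invlim G N" "y \<in> invlim G N"
    and idx: "n1 \<ge> 2" "n2 \<ge> 2" "m2 \<ge> 2" "n1 < n2"
    and hx1: "transl G s1 x \<in> cyl G N g n1"
    and hx2: "transl G s2 x \<in> cyl G N g n2"
    and hy1: "transl G s1 y \<notin> cyl G N g n1"
    and hy2: "transl G s2 y \<in> cyl G N g m2"
  shows "m2 \<le> n1"
proof (rule ccontr)
  assume "\<not> m2 \<le> n1"
  interpret subgroup_chain G N
    using grp nrm decr
    by (intro subgroup_chain.intro subgroup_chain_axioms.intro) (auto intro: normal_imp_subgroup)
  have "transl G s2 x n1 = N n1" "transl G s2 y n1 = N n1"
    using cyl_lower_level[OF _ hx2] cyl_lower_level[OF _ hy2] gam idx \<open>\<not> m2 \<le> n1\<close> by auto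
  then have "x n1 = y n1"
    using transl_level_eq_iff[OF s(2) xy, of n1] by metis
  then have "transl G s1 y n1 = transl G s1 x n1"
    unfolding transl_def by simp
  then have "transl G s1 y \<in> cyl G N g n1"
    using hx1 transl_invlim[OF s(1) xy(2)] unfolding cyl_def proj_def by simp
  with hy1 show False ..
qed

end
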